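(* Under the identification of the Lie algebroid of $\mathbb C^*\ltimes\mathbb C$ with $T_{\mathbb C}(-\log\{0\})$ via the anchor $(\partial_a,x)\mapsto x\partial_x$, and of holomorphic sections of $\mathbb C^*_{\mathbb C}( *\{0\})$ with $\mathcal O^*( *\{0\})$ (via $(x,f(x),i)\mapsto x^if(x)$), the Chevalley–Eilenberg complex of the $T_{\mathbb C}(-\log\{0\})$-module $\mathbb C^*_{\mathbb C}( *\{0\})$ (obtained by differentiating the $\mathbb C^*\ltimes\mathbb C$-module structure) is isomorphic to the complex $\mathcal O^*_{\mathbb C}( *\{0\})\xrightarrow{\mathrm{dlog}}\Omega^1_{\mathbb C}(\log\{0\})$.
   Context: $\mathbb C^*_{\mathbb C}( *\{0\}):=(\mathbb C\times\mathbb C^*\times\mathbb Z)/\!\sim$ with $(x,y,i)\sim(x,x^{-j}y,i+j)$ for $x\ne0$; it is a family of abelian groups over $\mathbb C$ (product $(x,y,i)(x,y',j)=(x,yy',i+j)$) and a module for the action groupoid $\mathbb C^*\ltimes\mathbb C$ ($a\cdot x=ax$) via $(a,x)\cdot(x,y,i)=(ax,a^{-i}y,i)$. Its Lie algebroid $\mathfrak m$ is the trivial line bundle $\mathbb C\times\mathbb C$ with trivial action. For a Lie algebroid $\mathfrak g$ and a $\mathfrak g$-module $M$ (representation on $\mathfrak m$ plus $\tilde L:\mathcal O(\mathfrak g)\otimes_{\mathbb Z}\mathcal O(M)\to\mathcal O(\mathfrak m)$ with $\tilde L_{fX}=f\tilde L_X$, $\tilde L_{[X,Y]}=L_X\tilde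 L_Y-L_Y\tilde L_X$, $\tilde L_X\exp\sigma=L_X\sigma$), the Chevalley–Eilenberg complex is $\mathcal O(M)\xrightarrow{d_{CE}\log}\mathcal O(\mathfrak g^*\otimes\mathfrak m)\to\mathcal O(\Lambda^2\mathfrak g^*\otimes\mathfrak m)\to\cdots$ with $d_{CE}\log s(X)=\tilde L_Xs$; a $G$-module induces a $\mathfrak g$-module by $\tilde L_{\dot\gamma(0)}r=\frac d{d\epsilon}|_0r(x)^{-1}[\gamma(\epsilon)^{-1}\cdot r(t(\gamma(\epsilon)))]$ for curves $\gamma$ in source fibres through the identity. $\Omega^1_{\mathbb C}(\log\{0\})$ is the sheaf of logarithmic $1$-forms with poles along $0$ and $T_{\mathbb C}(-\log\{0\})$ the Lie algebroid of vector fields vanishing at $0$. *)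

theory Defs
  imports "HOL-Complex_Analysis.Complex_Analysis"
begin

definition CMcar :: "(complex \<times> complex \<times> int) set" where
  "CMcar = {(x,y,i). y \<noteq> 0}"

definition CMrel :: "((complex \<times> complex \<times> int) \<times> (complex \<times> complex \<times> int)) set" where
  "CMrel = {((x,y,i),(x',y',i')). x' = x \<and> y \<noteq> 0 \<and> y' \<noteq> 0 \<and>
      (if x = 0 then y' = y \<and> i' = i else y' = x powi (i - i') * y)}"

definition cls :: "complex \<Rightarrow> complex \<Rightarrow> int \<Rightarrow> (complex \<times> complex \<times> int) set" where
  "cls x y i = CMrel `` {(x,y,i)}"

definition CM :: "(complex \<times> complex \<times> int) set set" where
  "CM = CMcar // CMrel"

definition rep :: "(complex \<times> complex \<times> int) set \<Rightarrow> complex \<times> complex \<times> int" where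
  "rep P = (SOME p. p \<in> P)"

definition proj :: "(complex \<times> complex \<times> int) set \<Rightarrow> complex" where
  "proj P = fst (rep P)"

definition fmult :: "(complex \<times> complex \<times> int) set \<Rightarrow> (complex \<times> complex \<times> int) set \<Rightarrow> (complex \<times> complex \<times> int) set" where
  "fmult P Q = (case rep P of (x,y,i) \<Rightarrow> case rep Q of (x',y',j) \<Rightarrow> cls x (y*y') (i+j))"

definition finv :: "(complex \<times> complex \<times> int) set \<Rightarrow> (complex \<times> complex \<times> int) set" where
  "finv P = (case rep P of (x,y,i) \<Rightarrow> cls x (inverse y) (-i))"

text \<open>Coordinate on the identity component of the fibre over x (classes of (x,y,0)),
  identifying it with C* and hence its Lie algebra with C (the line bundle m).\<close>

definition fcoord :: "(complex \<times> complex \<times> int) set \<Rightarrow> complex" where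
  "fcoord P = (THE y. (proj P, y, 0) \<in> P)"

definition gsrc :: "complex \<times> complex \<Rightarrow> complex" where "gsrc g = snd g"
definition gtgt :: "complex \<times> complex \<Rightarrow> complex" where "gtgt g = fst g * snd g"
definition ginv :: "complex \<times> complex \<Rightarrow> complex \<times> complex" where
  "ginv g = (inverse (fst g), fst g * snd g)"

definition gact :: "complex \<times> complex \<Rightarrow> (complex \<times> complex \<times> int) set \<Rightarrow> (complex \<times> complex \<times> int) set" where
  "gact g P = (case rep P of (x,y,i) \<Rightarrow> cls (fst g * x) (fst g powi (-i) * y) i)"

text \<open>The Lie algebroid of C* \<ltimes> C is the trivial bundle C \<times> C; the element v at x is v \<partial>_a,
  tangent to the curve eps \<mapsto> (exp(eps v), x) in the source fibre of x through the identity.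
  Ltilde_{v \<partial>_a at x} r = d/d eps|_0 r(x)^{-1} [gamma(eps)^{-1} . r(t(gamma(eps)))].\<close>

definition Ltilde_pt :: "complex \<Rightarrow> complex \<Rightarrow> (complex \<Rightarrow> (complex \<times> complex \<times> int) set) \<Rightarrow> complex" where
  "Ltilde_pt x v r = vector_derivative
     (\<lambda>eps::real. let \<gamma> = (exp (of_real eps * v), x) in
        fcoord (fmult (finv (r x)) (gact (ginv \<gamma>) (r (gtgt \<gamma>))))) (at 0)"

text \<open>Ltilde on a section X (coefficient function of \<partial>_a).\<close>

definition LtildeX :: "(complex \<Rightarrow> complex) \<Rightarrow> (complex \<Rightarrow> (complex \<times> complex \<times> int) set) \<Rightarrow> complex \<Rightarrow> complex" where
  "LtildeX X r = (\<lambda>x. Ltilde_pt x (X x) r)"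

definition secM :: "complex set \<Rightarrow> (complex \<Rightarrow> (complex \<times> complex \<times> int) set) set" where
  "secM U = {\<sigma>. (\<forall>x. x \<notin> U \<longrightarrow> \<sigma> x = {}) \<and>
     (\<forall>x0\<in>U. \<exists>W. open W \<and> x0 \<in> W \<and> W \<subseteq> U \<and>
        (\<exists>g i. g holomorphic_on W \<and> (\<forall>x\<in>W. g x \<noteq> 0) \<and> (\<forall>x\<in>W. \<sigma> x = cls x (g x) i)))}"

definition secmult :: "complex set \<Rightarrow> (complex \<Rightarrow> (complex \<times> complex \<times> int) set) \<Rightarrow> (complex \<Rightarrow> (complex \<times> complex \<times> int) set) \<Rightarrow> (complex \<Rightarrow> (complex \<times> complex \<times> int) set)" where
  "secmult U \<sigma> \<tau> = (\<lambda>x. if x \<in> U then fmult (\<sigma> x) (\<tau> x) else {})"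

text \<open>Holomorphic sections of g^* \<otimes> m (trivial line bundle), via their value on the frame \<partial>_a.\<close>

definition secGdual :: "complex set \<Rightarrow> (complex \<Rightarrow> complex) set" where
  "secGdual U = {\<alpha>. \<alpha> holomorphic_on U \<and> (\<forall>x. x \<notin> U \<longrightarrow> \<alpha> x = 0)}"

text \<open>d_CE log s, evaluated on the frame \<partial>_a (the section with constant coefficient 1).\<close>

definition dCE :: "complex set \<Rightarrow> (complex \<Rightarrow> (complex \<times> complex \<times> int) set) \<Rightarrow> complex \<Rightarrow> complex" where
  "dCE U s = (\<lambda>x. if x \<in> U then LtildeX (\<lambda>_. 1) s x else 0)"

text \<open>O^*(*{0})(U): meromorphic functions, holomorphic and nonvanishing off 0,
  locally x^i f(x) near 0 with f holomorphic nonvanishing (values normalised to 0 off U - {0}).\<close>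

definition Ostar_mero :: "complex set \<Rightarrow> (complex \<Rightarrow> complex) set" where
  "Ostar_mero U = {h. h holomorphic_on (U - {0}) \<and> (\<forall>x\<in>U - {0}. h x \<noteq> 0) \<and>
     (\<forall>x. x \<notin> U - {0} \<longrightarrow> h x = 0) \<and>
     (0 \<in> U \<longrightarrow> (\<exists>W f i. open W \<and> 0 \<in> W \<and> W \<subseteq> U \<and> f holomorphic_on W \<and>
        (\<forall>x\<in>W. f x \<noteq> 0) \<and> (\<forall>x\<in>W - {0}. h x = x powi i * f x)))}"

text \<open>\<Omega>^1(log {0})(U): forms g dx with x g holomorphic on U (coefficient g, normalised to 0 off U - {0}).\<close>

definition OmegaLog :: "complex set \<Rightarrow> (complex \<Rightarrow> complex) set" where
  "OmegaLog U = {g. g holomorphic_on (U - {0}) \<and> (\<forall>x. x \<notin> U - {0} \<longrightarrow> g x = 0) \<and>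
     (\<exists>G. G holomorphic_on U \<and> (\<forall>x\<in>U - {0}. G x = x * g x))}"

definition dlog :: "complex set \<Rightarrow> (complex \<Rightarrow> complex) \<Rightarrow> complex \<Rightarrow> complex" where
  "dlog U h = (\<lambda>x. if x \<in> U - {0} then deriv h x / h x else 0)"

definition phi0 :: "complex set \<Rightarrow> (complex \<Rightarrow> (complex \<times> complex \<times> int) set) \<Rightarrow> complex \<Rightarrow> complex" where
  "phi0 U \<sigma> = (\<lambda>x. if x \<in> U - {0} then (case rep (\<sigma> x) of (x',y,i) \<Rightarrow> x powi i * y) else 0)"

text \<open>Anchor: v \<partial>_a at x \<mapsto> v x \<partial>_x (coefficient of \<partial>_x).\<close>

definition anchor :: "complex \<Rightarrow> complex \<Rightarrow> complex" where
  "anchor x v = v * x"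

text \<open>Dual of the anchor identification g \<cong> T(-log 0): \<alpha> \<mapsto> \<omega> with \<omega>(anchor \<partial>_a) = \<alpha>(\<partial>_a).\<close>

definition phi1 :: "complex set \<Rightarrow> (complex \<Rightarrow> complex) \<Rightarrow> complex \<Rightarrow> complex" where
  "phi1 U \<alpha> = (\<lambda>x. if x \<in> U - {0} then \<alpha> x / anchor x 1 else 0)"

end

theory Submission
  imports Defs
begin

text \<open>A holomorphic section \<open>r\<close> of \<open>\<complex>\<^sup>*(*{0})\<close> is locally \<open>x \<mapsto> [(x, g x, i)]\<close> with \<open>g\<close>
  holomorphic and nonvanishing, and is sent to \<open>x\<^sup>i g(x)\<close>. The relation
  \<open>(x,y,i) \<sim> (x,x\<^sup>-\<^sup>jy,i+j)\<close> makes this well defined and injective away from \<open>0\<close>; at \<open>0\<close> the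
  pair \<open>(i, g 0)\<close> is recovered because \<open>x\<^sup>i g = x\<^sup>j h\<close> with \<open>g, h\<close> continuous and nonvanishing
  at \<open>0\<close> forces \<open>i = j\<close>. Along the curve \<open>\<epsilon> \<mapsto> (e\<^sup>\<epsilon>, x)\<close> in the source fibre, the fibre
  coordinate of \<open>r(x)\<^sup>-\<^sup>1 [\<gamma>(\<epsilon>)\<^sup>-\<^sup>1 \<cdot> r(e\<^sup>\<epsilon>x)]\<close> is \<open>e\<^sup>i\<^sup>\<epsilon> g(e\<^sup>\<epsilon>x) / g(x)\<close>, whose
  derivative at \<open>0\<close> is \<open>i + x g'(x)/g(x) = x \<cdot> dlog(x\<^sup>i g)(x)\<close>: the value of \<open>dlog(x\<^sup>i g)\<close>
  on the anchor image \<open>x\<partial>\<^sub>x\<close> of \<open>\<partial>\<^sub>a\<close>.\<close>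

lemma holomorphic_on_locally:
  assumes "\<And>x. x \<in> S \<Longrightarrow> \<exists>W. open W \<and> x \<in> W \<and> f holomorphic_on W"
  shows "f holomorphic_on S"
proof -
  obtain W where W: "\<And>x. x \<in> S \<Longrightarrow> open (W x) \<and> x \<in> W x \<and> f holomorphic_on W x"
    using assms by metis
  have "f holomorphic_on (\<Union>x\<in>S. W x)"
    by (rule holomorphic_on_UN_open) (use W in auto)
  thus ?thesis by (rule holomorphic_on_subset) (use W in auto)
qed

lemma continuous_on_eq_at_point:
  fixes f g :: "'a::perfect_space \<Rightarrow> 'b::t2_space"
  assumes W: "open W" "a \<in> W" and "continuous_on W f" "continuous_on W g"
    and eq: "\<And>x. x \<in> W \<Longrightarrow> x \<noteq> a \<Longrightarrow> f x = g x"
  shows "f a = g a"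
proof -
  have lim: "h \<midarrow>a\<rightarrow> h a" if "continuous_on W h" for h :: "'a \<Rightarrow> 'b"
  proof -
    have "(h \<longlongrightarrow> h a) (at a within W)" using that W(2) unfolding continuous_on_def by blast
    thus ?thesis by (simp add: at_within_open[OF W(2,1)])
  qed
  have "eventually (\<lambda>x. f x = g x) (at a)"
    unfolding eventually_at_topological using W eq by blast
  hence "g \<midarrow>a\<rightarrow> f a" using lim[OF \<open>continuous_on W f\<close>] by (simp add: tendsto_cong)
  thus ?thesis using lim[OF \<open>continuous_on W g\<close>] by (rule LIM_unique)
qed

lemma powi_factor_unique_le:
  fixes h1 h2 :: "complex \<Rightarrow> complex"
  assumes W: "open W" "0 \<in> W" and cont: "continuous_on W h1" "continuous_on W h2"
    and "h1 0 \<noteq> 0" "a \<le> b"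
    and eq: "\<And>y. y \<in> W \<Longrightarrow> y \<noteq> 0 \<Longrightarrow> y powi a * h1 y = y powi b * h2 y"
  shows "a = b \<and> h1 0 = h2 0"
proof -
  define n where "n = nat (b - a)"
  have off0: "h1 y = y ^ n * h2 y" if "y \<in> W" "y \<noteq> 0" for y
  proof -
    have "y powi b = y powi a * y ^ n"
      using power_int_add[of y a "b - a"] \<open>a \<le> b\<close> that(2) by (simp add: n_def power_int_def)
    thus ?thesis using eq[OF that] that(2) by simp
  qed
  have h10: "h1 0 = 0 ^ n * h2 0"
    by (rule continuous_on_eq_at_point[OF W cont(1)])
       (use cont(2) off0 in \<open>auto intro!: continuous_intros\<close>)
  hence "n = 0" using \<open>h1 0 \<noteq> 0\<close> by (cases n) auto
  thus ?thesis using h10 \<open>a \<le> b\<close> by (simp add: n_def)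
qed

lemma powi_factor_unique:
  fixes h1 h2 :: "complex \<Rightarrow> complex"
  assumes "open W" "0 \<in> W" "continuous_on W h1" "continuous_on W h2" "h1 0 \<noteq> 0" "h2 0 \<noteq> 0"
    and eq: "\<And>y. y \<in> W \<Longrightarrow> y \<noteq> 0 \<Longrightarrow> y powi a * h1 y = y powi b * h2 y"
  shows "a = b \<and> h1 0 = h2 0"
proof (cases "a \<le> b")
  case True
  show ?thesis by (rule powi_factor_unique_le[OF assms(1-5) True eq])
next
  case False
  have "b = a \<and> h2 0 = h1 0"
    by (rule powi_factor_unique_le[OF assms(1,2,4,3,6)]) (use False eq in auto)
  thus ?thesis by simp
qed

subsection \<open>Classes in \<open>\<complex>\<^sup>*(*{0})\<close>\<close>

lemma cls_mem:
  "y \<noteq> 0 \<Longrightarrow> (a,b,k) \<in> cls x y i \<longleftrightarrow>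
     a = x \<and> b \<noteq> 0 \<and> (if x = 0 then b = y \<and> k = i else b = x powi (i-k) * y)"
  unfolding cls_def CMrel_def by auto

lemma cls_self: "y \<noteq> 0 \<Longrightarrow> (x,y,i) \<in> cls x y i"
  by (simp add: cls_mem)

lemma cls_eqI:
  assumes "y \<noteq> 0" "(a,b,k) \<in> cls x y i"
  shows "cls a b k = cls x y i"
proof (rule set_eqI)
  from assms have a: "a = x" and b: "b \<noteq> 0"
    and c: "if x = 0 then b = y \<and> k = i else b = x powi (i-k) * y"
    by (auto simp: cls_mem)
  fix p :: "complex \<times> complex \<times> int"
  obtain a' b' k' where p: "p = (a',b',k')" by (cases p)
  show "p \<in> cls a b k \<longleftrightarrow> p \<in> cls x y i"
  proof (cases "x = 0")
    case True thus ?thesis using a b c assms(1) by (simp add: p cls_mem)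
  next
    case False
    have "x powi (k - k') * x powi (i - k) = x powi (i - k')"
      using power_int_add[of x "k - k'" "i - k"] False by simp
    hence "b' = x powi (k - k') * b \<longleftrightarrow> b' = x powi (i - k') * y"
      using c False by (simp add: mult.assoc[symmetric])
    thus ?thesis using a b False assms(1) by (simp add: p cls_mem)
  qed
qed

lemma cls_shift:
  assumes "x \<noteq> 0" "y \<noteq> 0"
  shows "cls x (x powi (i - j) * y) j = cls x y i"
  by (rule cls_eqI) (use assms in \<open>auto simp: cls_mem\<close>)

lemma cls_normalize:
  assumes "x \<noteq> 0" "y \<noteq> 0"
  shows "cls x y i = cls x (x powi i * y) 0"
  using cls_shift[OF assms, of i 0] by simp

lemma rep_cls:
  assumes "y \<noteq> 0"
  obtains y' i' where "rep (cls x y i) = (x, y', i')" "y' \<noteq> 0"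
    "if x = 0 then y' = y \<and> i' = i else y' = x powi (i - i') * y"
proof -
  have "rep (cls x y i) \<in> cls x y i"
    unfolding rep_def using cls_self[OF assms] by (rule someI)
  then obtain a y' i' where "rep (cls x y i) = (a,y',i')" "(a,y',i') \<in> cls x y i"
    by (metis prod_cases3)
  thus ?thesis using that assms by (auto simp: cls_mem)
qed

lemma fmult_cls:
  assumes "a \<noteq> 0" "b \<noteq> 0"
  shows "fmult (cls x a i) (cls x b j) = cls x (a*b) (i+j)"
proof -
  obtain a' i' where r1: "rep (cls x a i) = (x, a', i')"
    "if x = 0 then a' = a \<and> i' = i else a' = x powi (i - i') * a" using rep_cls[OF assms(1)] by metis
  obtain b' j' where r2: "rep (cls x b j) = (x, b', j')"
    "if x = 0 then b' = b \<and> j' = j else b' = x powi (j - j') * b" using rep_cls[OF assms(2)] by metis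
  have "fmult (cls x a i) (cls x b j) = cls x (a'*b') (i'+j')"
    by (simp add: fmult_def r1 r2)
  also have "\<dots> = cls x (a*b) (i+j)"
  proof (cases "x = 0")
    case True thus ?thesis using r1 r2 by simp
  next
    case False
    have "x powi (i + j - (i' + j')) = x powi (i - i') * x powi (j - j')"
      using power_int_add[of x "i-i'" "j-j'"] False by (simp add: algebra_simps)
    hence "a'*b' = x powi (i + j - (i' + j')) * (a*b)" using r1 r2 False by simp
    thus ?thesis using cls_shift[OF False, of "a*b" "i+j" "i'+j'"] assms by simp
  qed
  finally show ?thesis .
qed

lemma finv_cls:
  assumes "a \<noteq> 0"
  shows "finv (cls x a i) = cls x (inverse a) (-i)"
proof -
  obtain a' i' where r: "rep (cls x a i) = (x, a', i')"
    "if x = 0 then a' = a \<and> i' = i else a' = x powi (i - i') * a" using rep_cls[OF assms] by metis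
  have "finv (cls x a i) = cls x (inverse a') (-i')"
    by (simp add: finv_def r)
  also have "\<dots> = cls x (inverse a) (-i)"
  proof (cases "x = 0")
    case True thus ?thesis using r by simp
  next
    case False
    have "inverse a' = x powi (-i - (-i')) * inverse a"
      using r False by (simp add: power_int_minus[symmetric] power_int_inverse[symmetric])
    thus ?thesis using cls_shift[OF False, of "inverse a" "-i" "-i'"] assms by simp
  qed
  finally show ?thesis .
qed

lemma gact_cls:
  assumes "c \<noteq> 0" "y \<noteq> 0"
  shows "gact (c, z) (cls x y i) = cls (c*x) (c powi (-i) * y) i"
proof -
  obtain a' i' where r: "rep (cls x y i) = (x, a', i')"
    "if x = 0 then a' = y \<and> i' = i else a' = x powi (i - i') * y" using rep_cls[OF assms(2)] by metis
  have "gact (c,z) (cls x y i) = cls (c*x) (c powi (-i') * a') i'"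
    by (simp add: gact_def r)
  also have "\<dots> = cls (c*x) (c powi (-i) * y) i"
  proof (cases "x = 0")
    case True thus ?thesis using r by simp
  next
    case False
    hence cx: "c*x \<noteq> 0" using assms by simp
    have "c powi (i - i') * c powi (-i) = c powi (-i')"
      using power_int_add[of c "i-i'" "-i"] assms(1) by simp
    hence "c powi (-i') * a' = (c*x) powi (i - i') * (c powi (-i) * y)"
      using r False by (simp add: power_int_mult_distrib algebra_simps)
    thus ?thesis using cls_shift[OF cx, of "c powi (-i) * y" i i'] assms by simp
  qed
  finally show ?thesis .
qed

lemma fcoord_cls:
  assumes "c \<noteq> 0"
  shows "fcoord (cls x c 0) = c"
proof -
  obtain a' i' where "rep (cls x c 0) = (x, a', i')" using rep_cls[OF assms] by metis
  hence "proj (cls x c 0) = x" by (simp add: proj_def)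
  thus ?thesis unfolding fcoord_def using assms by (auto simp: cls_mem)
qed

definition sec_chart ::
  "(complex \<Rightarrow> (complex \<times> complex \<times> int) set) \<Rightarrow> complex set \<Rightarrow> (complex \<Rightarrow> complex) \<Rightarrow> int \<Rightarrow> bool"
  where "sec_chart \<sigma> W g i \<longleftrightarrow>
    open W \<and> g holomorphic_on W \<and> (\<forall>y\<in>W. g y \<noteq> 0) \<and> (\<forall>y\<in>W. \<sigma> y = cls y (g y) i)"

lemma secM_iff:
  "\<sigma> \<in> secM U \<longleftrightarrow>
     (\<forall>x. x \<notin> U \<longrightarrow> \<sigma> x = {}) \<and> (\<forall>x\<in>U. \<exists>W g i. x \<in> W \<and> W \<subseteq> U \<and> sec_chart \<sigma> W g i)"
  unfolding secM_def sec_chart_def by blast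

lemma secM_chart:
  assumes "\<sigma> \<in> secM U" "x \<in> U"
  obtains W g i where "x \<in> W" "W \<subseteq> U" "sec_chart \<sigma> W g i"
  using assms by (auto simp: secM_iff)

lemma secM_outside: "\<sigma> \<in> secM U \<Longrightarrow> x \<notin> U \<Longrightarrow> \<sigma> x = {}"
  by (simp add: secM_iff)

lemma sec_chart_subset:
  "sec_chart \<sigma> W g i \<Longrightarrow> open V \<Longrightarrow> V \<subseteq> W \<Longrightarrow> sec_chart \<sigma> V g i"
  unfolding sec_chart_def using holomorphic_on_subset by blast

lemma secM_common_chart:
  assumes "\<sigma> \<in> secM U" "\<tau> \<in> secM U" "x \<in> U"
  obtains W g1 i1 g2 i2 where "x \<in> W" "W \<subseteq> U" "sec_chart \<sigma> W g1 i1" "sec_chart \<tau> W g2 i2"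
proof -
  obtain W1 g1 i1 where W1: "x \<in> W1" "W1 \<subseteq> U" "sec_chart \<sigma> W1 g1 i1"
    using secM_chart[OF assms(1,3)] .
  obtain W2 g2 i2 where W2: "x \<in> W2" "W2 \<subseteq> U" "sec_chart \<tau> W2 g2 i2"
    using secM_chart[OF assms(2,3)] .
  have "open W1" "open W2" using W1(3) W2(3) by (auto simp: sec_chart_def)
  thus ?thesis
    using that[of "W1 \<inter> W2"] W1 W2 sec_chart_subset[of _ _ _ _ "W1 \<inter> W2"] by blast
qed

subsection \<open>The identification with \<open>\<O>\<^sup>*(*{0})\<close>\<close>

lemma phi0_cls:
  assumes "x \<in> U" "x \<noteq> 0" "\<sigma> x = cls x y i" "y \<noteq> 0"
  shows "phi0 U \<sigma> x = x powi i * y"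
proof -
  obtain y' i' where r: "rep (cls x y i) = (x, y', i')" "y' = x powi (i - i') * y"
    using rep_cls[OF assms(4)] assms(2) by metis
  have "x powi i = x powi i' * x powi (i - i')"
    using power_int_add[of x i' "i - i'"] assms(2) by simp
  thus ?thesis using assms(1-3) r by (simp add: phi0_def algebra_simps)
qed

lemma phi0_chart:
  assumes "sec_chart \<sigma> W g i" "W \<subseteq> U" "x \<in> W" "x \<noteq> 0"
  shows "phi0 U \<sigma> x = x powi i * g x"
  using assms by (intro phi0_cls) (auto simp: sec_chart_def)

lemma phi0_outside: "x \<notin> U - {0} \<Longrightarrow> phi0 U \<sigma> x = 0"
  by (auto simp: phi0_def)

lemma phi0_mem_Ostar_mero:
  assumes "\<sigma> \<in> secM U"
  shows "phi0 U \<sigma> \<in> Ostar_mero U"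
proof -
  have holo: "phi0 U \<sigma> holomorphic_on (U - {0})"
  proof (rule holomorphic_on_locally)
    fix x assume x: "x \<in> U - {0}"
    then obtain W g i where W: "x \<in> W" "W \<subseteq> U" "sec_chart \<sigma> W g i"
      using secM_chart[OF assms] by blast
    have "(\<lambda>y. y powi i * g y) holomorphic_on (W - {0})"
      using W(3) holomorphic_on_subset[of g W "W - {0}"]
      by (auto simp: sec_chart_def intro!: holomorphic_intros)
    hence "phi0 U \<sigma> holomorphic_on (W - {0})"
      by (rule holomorphic_transform) (use phi0_chart[OF W(3,2)] in auto)
    thus "\<exists>V. open V \<and> x \<in> V \<and> phi0 U \<sigma> holomorphic_on V"
      using W x by (auto simp: sec_chart_def)
  qed
  have nonzero: "phi0 U \<sigma> x \<noteq> 0" if x: "x \<in> U - {0}" for x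
  proof -
    obtain W g i where W: "x \<in> W" "W \<subseteq> U" and c: "sec_chart \<sigma> W g i"
      using secM_chart[OF assms] x by blast
    have "g x \<noteq> 0" using c W(1) by (simp add: sec_chart_def)
    thus ?thesis using phi0_chart[OF c W(2,1)] x by simp
  qed
  have at0: "\<exists>W f i. open W \<and> 0 \<in> W \<and> W \<subseteq> U \<and> f holomorphic_on W \<and>
      (\<forall>x\<in>W. f x \<noteq> 0) \<and> (\<forall>x\<in>W - {0}. phi0 U \<sigma> x = x powi i * f x)" if "0 \<in> U"
  proof -
    obtain W g i where W: "0 \<in> W" "W \<subseteq> U" and c: "sec_chart \<sigma> W g i"
      using secM_chart[OF assms \<open>0 \<in> U\<close>] .
    have "\<forall>x\<in>W - {0}. phi0 U \<sigma> x = x powi i * g x" using phi0_chart[OF c W(2)] by blast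
    thus ?thesis using c W unfolding sec_chart_def by blast
  qed
  show ?thesis
    unfolding Ostar_mero_def mem_Collect_eq by (intro conjI ballI allI impI holo nonzero at0 phi0_outside)
qed

lemma phi0_inj: "inj_on (phi0 U) (secM U)"
proof (rule inj_onI, rule ext)
  fix \<sigma> \<tau> x assume s: "\<sigma> \<in> secM U" and t: "\<tau> \<in> secM U" and eq: "phi0 U \<sigma> = phi0 U \<tau>"
  show "\<sigma> x = \<tau> x"
  proof (cases "x \<in> U")
    case False thus ?thesis using secM_outside s t by metis
  next
    case True
    then obtain W g1 i1 g2 i2 where W: "x \<in> W" "W \<subseteq> U"
      and c1: "sec_chart \<sigma> W g1 i1" and c2: "sec_chart \<tau> W g2 i2"
      using secM_common_chart[OF s t] by blast
    have g: "open W" "\<And>y. y \<in> W \<Longrightarrow> g1 y \<noteq> 0 \<and> g2 y \<noteq> 0"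
      "\<And>y. y \<in> W \<Longrightarrow> \<sigma> y = cls y (g1 y) i1 \<and> \<tau> y = cls y (g2 y) i2"
      using c1 c2 by (auto simp: sec_chart_def)
    have peq: "y powi i1 * g1 y = y powi i2 * g2 y" if "y \<in> W" "y \<noteq> 0" for y
      using phi0_chart[OF c1 W(2) that] phi0_chart[OF c2 W(2) that] eq by simp
    show ?thesis
    proof (cases "x = 0")
      case False
      have "\<sigma> x = cls x (x powi i1 * g1 x) 0"
        using g(2,3)[OF W(1)] cls_normalize[OF False, of "g1 x" i1] by simp
      also have "\<dots> = \<tau> x"
        using g(2,3)[OF W(1)] cls_normalize[OF False, of "g2 x" i2] peq[OF W(1) False] by simp
      finally show ?thesis .
    next
      case x0: True
      have "continuous_on W g1" "continuous_on W g2"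
        using c1 c2 holomorphic_on_imp_continuous_on by (auto simp: sec_chart_def)
      moreover have "g1 0 \<noteq> 0" "g2 0 \<noteq> 0" using g(2) W(1) x0 by auto
      ultimately have "i1 = i2 \<and> g1 0 = g2 0"
        using powi_factor_unique[OF g(1) W(1)[unfolded x0] _ _ _ _ peq] by blast
      thus ?thesis using g(3) W(1) x0 by simp
    qed
  qed
qed

lemma phi0_surj:
  assumes U: "open U" and h: "h \<in> Ostar_mero U"
  shows "h \<in> phi0 U ` secM U"
proof -
  have hh: "h holomorphic_on (U - {0})" "\<And>x. x \<in> U - {0} \<Longrightarrow> h x \<noteq> 0"
    "\<And>x. x \<notin> U - {0} \<Longrightarrow> h x = 0"
    using h unfolding Ostar_mero_def by simp_all
  obtain W0 f i where W0: "0 \<in> U \<Longrightarrow> open W0 \<and> 0 \<in> W0 \<and> W0 \<subseteq> U \<and> f holomorphic_on W0 \<and>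
      (\<forall>x\<in>W0. f x \<noteq> 0) \<and> (\<forall>x\<in>W0 - {0}. h x = x powi i * f x)"
    using h unfolding Ostar_mero_def by blast
  define \<sigma> where "\<sigma> = (\<lambda>x. if x \<in> U then if x = 0 then cls 0 (f 0) i else cls x (h x) 0 else {})"
  have \<sigma>_off0: "\<sigma> x = cls x (h x) 0" if "x \<in> U - {0}" for x
    using that by (simp add: \<sigma>_def)
  have chart_off0: "sec_chart \<sigma> (U - {0}) h 0"
    unfolding sec_chart_def using U hh(1,2) \<sigma>_off0 by blast
  have chart_at0: "sec_chart \<sigma> W0 f i" if "0 \<in> U"
  proof -
    have w: "open W0" "W0 \<subseteq> U" "f holomorphic_on W0" "\<And>x. x \<in> W0 \<Longrightarrow> f x \<noteq> 0"
      "\<And>x. x \<in> W0 \<Longrightarrow> x \<noteq> 0 \<Longrightarrow> h x = x powi i * f x"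
      using W0[OF that] by auto
    have "\<sigma> y = cls y (f y) i" if y: "y \<in> W0" for y
    proof (cases "y = 0")
      case False
      have "\<sigma> y = cls y (y powi i * f y) 0" using \<sigma>_off0 w(2,5) y False by auto
      thus ?thesis using cls_normalize[OF False w(4)[OF y], of i] by simp
    qed (simp add: \<sigma>_def \<open>0 \<in> U\<close>)
    thus ?thesis unfolding sec_chart_def using w(1,3,4) by blast
  qed
  have "\<sigma> \<in> secM U"
    unfolding secM_iff
  proof (intro conjI allI impI ballI)
    fix x assume x: "x \<in> U"
    show "\<exists>W g i. x \<in> W \<and> W \<subseteq> U \<and> sec_chart \<sigma> W g i"
    proof (cases "x = 0")
      case True
      thus ?thesis using chart_at0 W0 x by blast
    next
      case False
      show ?thesis
        by (rule exI[of _ "U - {0}"], rule exI[of _ h], rule exI[of _ "0::int"])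
           (use chart_off0 x False in auto)
    qed
  qed (simp add: \<sigma>_def)
  moreover have "phi0 U \<sigma> = h"
  proof
    fix x show "phi0 U \<sigma> x = h x"
    proof (cases "x \<in> U - {0}")
      case True
      thus ?thesis using phi0_cls[of x U \<sigma> "h x" 0] \<sigma>_off0 hh(2) by simp
    qed (simp add: phi0_outside hh(3))
  qed
  ultimately show ?thesis by blast
qed

lemma secmult_chart:
  assumes c1: "sec_chart \<sigma> W g1 i1" and c2: "sec_chart \<tau> W g2 i2" and "W \<subseteq> U"
  shows "sec_chart (secmult U \<sigma> \<tau>) W (\<lambda>y. g1 y * g2 y) (i1 + i2)"
proof -
  have g: "open W" "g1 holomorphic_on W" "g2 holomorphic_on W"
    "\<And>y. y \<in> W \<Longrightarrow> g1 y \<noteq> 0 \<and> g2 y \<noteq> 0"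
    "\<And>y. y \<in> W \<Longrightarrow> \<sigma> y = cls y (g1 y) i1 \<and> \<tau> y = cls y (g2 y) i2"
    using c1 c2 unfolding sec_chart_def by blast+
  have "secmult U \<sigma> \<tau> y = cls y (g1 y * g2 y) (i1 + i2)" if y: "y \<in> W" for y
    using g(4,5)[OF y] \<open>W \<subseteq> U\<close> y by (auto simp: secmult_def fmult_cls)
  moreover have "(\<lambda>y. g1 y * g2 y) holomorphic_on W"
    using g(2,3) by (rule holomorphic_on_mult)
  ultimately show ?thesis unfolding sec_chart_def using g(1,4) by simp
qed

lemma secmult_mem_secM:
  assumes "\<sigma> \<in> secM U" "\<tau> \<in> secM U"
  shows "secmult U \<sigma> \<tau> \<in> secM U"
  unfolding secM_iff
proof (intro conjI allI impI ballI)
  fix x assume "x \<in> U"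
  then obtain W g1 i1 g2 i2 where W: "x \<in> W" "W \<subseteq> U"
    and c: "sec_chart \<sigma> W g1 i1" "sec_chart \<tau> W g2 i2"
    using secM_common_chart[OF assms] by blast
  show "\<exists>W g i. x \<in> W \<and> W \<subseteq> U \<and> sec_chart (secmult U \<sigma> \<tau>) W g i"
    using W secmult_chart[OF c W(2)] by blast
qed (simp add: secmult_def)

lemma phi0_secmult:
  assumes "\<sigma> \<in> secM U" "\<tau> \<in> secM U"
  shows "phi0 U (secmult U \<sigma> \<tau>) = (\<lambda>x. phi0 U \<sigma> x * phi0 U \<tau> x)"
proof
  fix x show "phi0 U (secmult U \<sigma> \<tau>) x = phi0 U \<sigma> x * phi0 U \<tau> x"
  proof (cases "x \<in> U - {0}")
    case True
    then obtain W g1 i1 g2 i2 where W: "x \<in> W" "W \<subseteq> U"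
      and c: "sec_chart \<sigma> W g1 i1" "sec_chart \<tau> W g2 i2"
      using secM_common_chart[OF assms] by blast
    have "phi0 U (secmult U \<sigma> \<tau>) x = x powi (i1 + i2) * (g1 x * g2 x)"
      using phi0_chart[OF secmult_chart[OF c W(2)] W(2,1)] True by simp
    also have "\<dots> = (x powi i1 * g1 x) * (x powi i2 * g2 x)"
      using power_int_add[of x i1 i2] True by (simp add: mult_ac)
    also have "\<dots> = phi0 U \<sigma> x * phi0 U \<tau> x"
      using phi0_chart[OF c(1) W(2,1)] phi0_chart[OF c(2) W(2,1)] True by simp
    finally show ?thesis .
  qed (simp add: phi0_outside)
qed

subsection \<open>The identification with \<open>\<Omega>\<^sup>1(log {0})\<close>\<close>

lemma phi1_eq: "phi1 U \<alpha> = (\<lambda>x. if x \<in> U - {0} then \<alpha> x / x else 0)"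
  by (simp add: phi1_def anchor_def fun_eq_iff)

lemma phi1_add: "phi1 U (\<lambda>x. \<alpha> x + \<beta> x) = (\<lambda>x. phi1 U \<alpha> x + phi1 U \<beta> x)"
  by (auto simp: phi1_eq add_divide_distrib)

lemma phi1_inj:
  assumes "open U"
  shows "inj_on (phi1 U) (secGdual U)"
proof (rule inj_onI, rule ext)
  fix \<alpha> \<beta> x assume a: "\<alpha> \<in> secGdual U" and b: "\<beta> \<in> secGdual U" and e: "phi1 U \<alpha> = phi1 U \<beta>"
  have off0: "\<alpha> y = \<beta> y" if "y \<in> U" "y \<noteq> 0" for y
    using fun_cong[OF e, of y] that by (simp add: phi1_eq)
  show "\<alpha> x = \<beta> x"
  proof (cases "x \<in> U")
    case True
    show ?thesis
    proof (cases "x = 0")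
      case x0: True
      show ?thesis unfolding x0
        by (rule continuous_on_eq_at_point[OF assms \<open>x \<in> U\<close>[unfolded x0]])
           (use a b off0 holomorphic_on_imp_continuous_on in \<open>auto simp: secGdual_def\<close>)
    qed (use off0 True in blast)
  qed (use a b in \<open>simp add: secGdual_def\<close>)
qed

lemma phi1_image: "phi1 U ` secGdual U = OmegaLog U"
proof (intro set_eqI iffI)
  fix g assume "g \<in> phi1 U ` secGdual U"
  then obtain \<alpha> where "\<alpha> holomorphic_on U" and g: "g = phi1 U \<alpha>"
    by (auto simp: secGdual_def)
  moreover have "(\<lambda>x. \<alpha> x / x) holomorphic_on (U - {0})"
    using holomorphic_on_subset[OF \<open>\<alpha> holomorphic_on U\<close>, of "U - {0}"]
    by (auto intro!: holomorphic_intros)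
  hence "g holomorphic_on (U - {0})"
    by (rule holomorphic_transform) (simp add: g phi1_eq)
  ultimately show "g \<in> OmegaLog U"
    unfolding OmegaLog_def by (auto simp: phi1_eq)
next
  fix g assume "g \<in> OmegaLog U"
  then obtain G where G: "G holomorphic_on U" "\<forall>x\<in>U - {0}. G x = x * g x"
    and g0: "\<And>x. x \<notin> U - {0} \<Longrightarrow> g x = 0"
    unfolding OmegaLog_def by blast
  define \<alpha> where "\<alpha> = (\<lambda>x. if x \<in> U then G x else 0)"
  have "\<alpha> holomorphic_on U" by (rule holomorphic_transform[OF G(1)]) (simp add: \<alpha>_def)
  hence "\<alpha> \<in> secGdual U" by (simp add: secGdual_def \<alpha>_def)
  moreover have "phi1 U \<alpha> = g"
    using G(2) g0 by (auto simp: phi1_eq \<alpha>_def)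
  ultimately show "g \<in> phi1 U ` secGdual U" by blast
qed

subsection \<open>The Chevalley--Eilenberg differential\<close>

lemma Ltilde_curve_chart:
  assumes "sec_chart s W g i" "x \<in> W" "c * x \<in> W" "c \<noteq> 0"
  shows "fcoord (fmult (finv (s x)) (gact (ginv (c, x)) (s (gtgt (c, x))))) =
    c powi i * g (c * x) / g x"
proof -
  have g: "g x \<noteq> 0" "g (c * x) \<noteq> 0" "s x = cls x (g x) i" "s (c * x) = cls (c * x) (g (c * x)) i"
    using assms by (auto simp: sec_chart_def)
  have inv: "inverse c * (c * x) = x" using assms(4) by simp
  have "gact (ginv (c, x)) (s (gtgt (c, x))) = cls x (c powi i * g (c * x)) i"
    using g assms(4) gact_cls[of "inverse c" "g (c * x)" "c * x" "c * x" i] unfolding inv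
    by (simp add: ginv_def gtgt_def power_int_minus power_int_inverse)
  thus ?thesis
    using g assms(4) by (simp add: finv_cls fmult_cls fcoord_cls field_simps)
qed

lemma Ltilde_pt_chart:
  assumes chart: "sec_chart s W g i" and x: "x \<in> W"
  shows "Ltilde_pt x 1 s = of_int i + x * deriv g x / g x"
proof -
  have W: "open W" "g holomorphic_on W" "g x \<noteq> 0" using assms by (auto simp: sec_chart_def)
  define S where "S = (\<lambda>e::real. exp (of_real e) * x) -` W"
  have "open S" unfolding S_def
    by (rule open_vimage[OF W(1)]) (auto intro!: continuous_intros)
  have "0 \<in> S" using x by (simp add: S_def)
  define H where "H = (\<lambda>z. exp (of_int i * z) * g (exp z * x) / g x)"
  have "(g has_field_derivative deriv g x) (at (exp 0 * x))"
    using holomorphic_derivI[OF W(2,1) x] by simp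
  moreover have "((\<lambda>z. exp z * x) has_field_derivative x) (at 0)"
    by (auto intro!: derivative_eq_intros)
  ultimately have "((\<lambda>z. g (exp z * x)) has_field_derivative deriv g x * x) (at 0)"
    by (rule DERIV_chain2)
  hence "(H has_field_derivative of_int i + x * deriv g x / g x) (at (of_real 0))"
    unfolding H_def using W(3)
    by (auto intro!: derivative_eq_intros simp: field_simps)
  hence "((\<lambda>e. H (of_real e)) has_vector_derivative of_int i + x * deriv g x / g x) (at 0)"
    by (rule has_vector_derivative_real_field)
  hence "((\<lambda>e::real. let \<gamma> = (exp (of_real e * 1), x) in
      fcoord (fmult (finv (s x)) (gact (ginv \<gamma>) (s (gtgt \<gamma>))))) has_vector_derivative
      of_int i + x * deriv g x / g x) (at 0)"
  proof (rule has_vector_derivative_transform_within_open[OF _ \<open>open S\<close> \<open>0 \<in> S\<close>])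
    fix e assume "e \<in> S"
    thus "H (of_real e) = (let \<gamma> = (exp (of_real e * 1), x) in
        fcoord (fmult (finv (s x)) (gact (ginv \<gamma>) (s (gtgt \<gamma>)))))"
      using Ltilde_curve_chart[OF chart x, of "exp (of_real e)"]
      by (simp add: S_def H_def exp_power_int)
  qed
  thus ?thesis unfolding Ltilde_pt_def by (rule vector_derivative_at)
qed

lemma dCE_chart:
  assumes "sec_chart s W g i" "W \<subseteq> U" "x \<in> W"
  shows "dCE U s x = of_int i + x * deriv g x / g x"
  using assms Ltilde_pt_chart by (auto simp: dCE_def LtildeX_def)

lemma dCE_mem_secGdual:
  assumes "s \<in> secM U"
  shows "dCE U s \<in> secGdual U"
proof -
  have "dCE U s holomorphic_on U"
  proof (rule holomorphic_on_locally)
    fix x assume "x \<in> U"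
    then obtain W g i where W: "x \<in> W" "W \<subseteq> U" and c: "sec_chart s W g i"
      using secM_chart[OF assms] by blast
    have "(\<lambda>y. of_int i + y * deriv g y / g y) holomorphic_on W"
      using c by (auto simp: sec_chart_def intro!: holomorphic_intros)
    hence "dCE U s holomorphic_on W"
      by (rule holomorphic_transform) (use dCE_chart[OF c W(2)] in auto)
    thus "\<exists>V. open V \<and> x \<in> V \<and> dCE U s holomorphic_on V"
      using W c by (auto simp: sec_chart_def)
  qed
  thus ?thesis by (simp add: secGdual_def dCE_def)
qed

lemma dlog_phi0_chart:
  assumes c: "sec_chart s W g i" and "W \<subseteq> U" "x \<in> W" "x \<noteq> 0"
  shows "dlog U (phi0 U s) x = (of_int i + x * deriv g x / g x) / x"
proof -
  have W: "open W" "g holomorphic_on W" "g x \<noteq> 0" using assms by (auto simp: sec_chart_def)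
  have "((\<lambda>y. y powi i * g y) has_field_derivative
      of_int i * x powi (i - 1) * g x + x powi i * deriv g x) (at x)"
    using holomorphic_derivI[OF W(2,1) \<open>x \<in> W\<close>] \<open>x \<noteq> 0\<close>
    by (auto intro!: derivative_eq_intros)
  hence "(phi0 U s has_field_derivative
      of_int i * x powi (i - 1) * g x + x powi i * deriv g x) (at x)"
    by (rule has_field_derivative_transform_within_open[of _ _ _ "W - {0}"])
       (use W(1) assms phi0_chart[OF c \<open>W \<subseteq> U\<close>] in auto)
  moreover have "x powi (i - 1) = x powi i / x"
    using power_int_diff[of x i 1] \<open>x \<noteq> 0\<close> by simp
  moreover have "x \<in> U" using assms by auto
  ultimately show ?thesis
    using assms W(3) phi0_chart[OF c \<open>W \<subseteq> U\<close> \<open>x \<in> W\<close> \<open>x \<noteq> 0\<close>]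
    by (simp add: dlog_def DERIV_imp_deriv field_simps)
qed

lemma phi1_dCE:
  assumes "s \<in> secM U"
  shows "phi1 U (dCE U s) = dlog U (phi0 U s)"
proof
  fix x show "phi1 U (dCE U s) x = dlog U (phi0 U s) x"
  proof (cases "x \<in> U - {0}")
    case True
    then obtain W g i where "x \<in> W" "W \<subseteq> U" "sec_chart s W g i"
      using secM_chart[OF assms] by blast
    thus ?thesis using True dCE_chart dlog_phi0_chart by (simp add: phi1_eq)
  qed (auto simp: phi1_eq dlog_def)
qed

theorem mainTheorem16:
  fixes U :: "complex set"
  assumes "open U"
  shows "bij_betw (phi0 U) (secM U) (Ostar_mero U)
    \<and> (\<forall>\<sigma>\<in>secM U. \<forall>\<tau>\<in>secM U. secmult U \<sigma> \<tau> \<in> secM U \<and>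
          phi0 U (secmult U \<sigma> \<tau>) = (\<lambda>x. phi0 U \<sigma> x * phi0 U \<tau> x))
    \<and> bij_betw (phi1 U) (secGdual U) (OmegaLog U)
    \<and> (\<forall>\<alpha>\<in>secGdual U. \<forall>\<beta>\<in>secGdual U. phi1 U (\<lambda>x. \<alpha> x + \<beta> x) = (\<lambda>x. phi1 U \<alpha> x + phi1 U \<beta> x))
    \<and> (\<forall>s\<in>secM U. dCE U s \<in> secGdual U \<and> phi1 U (dCE U s) = dlog U (phi0 U s))"
proof (intro conjI ballI)
  have "phi0 U ` secM U = Ostar_mero U"
    using phi0_mem_Ostar_mero phi0_surj[OF assms] by blast
  thus "bij_betw (phi0 U) (secM U) (Ostar_mero U)"
    using phi0_inj by (simp add: bij_betw_def)
  show "bij_betw (phi1 U) (secGdual U) (OmegaLog U)"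
    using phi1_inj[OF assms] phi1_image by (simp add: bij_betw_def)
qed (simp_all add: secmult_mem_secM phi0_secmult phi1_add dCE_mem_secGdual phi1_dCE)

end
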